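(* Let $N\in\boldsymbol{\Pi}_{q,r}$. Let $x\in\mathbb{R}^q$ be nonzero and $y\in\mathbb{R}^r$ be such that $\begin{bmatrix}x\\ y\end{bmatrix}^\top N\begin{bmatrix}x\\ y\end{bmatrix}\ge 0$. Then there exists $Z\in\mathcal{Z}_r(N)$ such that $\begin{bmatrix}x\\ y\end{bmatrix}=\begin{bmatrix}I\\ Z\end{bmatrix}x$, i.e., $y=Zx$.
   Context: $\mathbb{S}^k$ denotes the real symmetric $k\times k$ matrices; for symmetric matrices, $A\ge 0$ means positive semidefinite. $A^\dagger$ is the Moore–Penrose pseudo-inverse. Any $N\in\mathbb{S}^{q+r}$ is partitioned as $N=\begin{bmatrix}N_{11}&N_{12}\\ N_{21}&N_{22}\end{bmatrix}$ with $N_{11}\in\mathbb{S}^q$, $N_{22}\in\mathbb{S}^r$. The generalized Schur complement is $N\mid N_{22}:=N_{11}-N_{12}N_{22}^\dagger N_{21}$. The set $\boldsymbol{\Pi}_{q,r}$ consists of all $N\in\mathbb{S}^{q+r}$ with $N_{22}\le 0$, $N\mid N_{22}\ge 0$ and $\ker N_{22}\subseteq\ker N_{12}$. Define $\mathcal{Z}_r(N)=\{Z\in\mathbb{R}^{r\times q}:\begin{bmatrix}I_q\\ Z\end{bmatrix}^\top N\begin{bmatrix}I_q\\ Z\end{bmatrix}\ge 0\}$. *)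

theory Defs
  imports "HOL-Analysis.Analysis"
begin

text \<open>Matrices in S^(q+r) are represented as real matrices indexed by the sum type
  'q + 'r; the block (1,1) corresponds to the Inl indices, block (2,2) to Inr indices.\<close>

definition sym_mat :: "real^'n^'n \<Rightarrow> bool" where
  "sym_mat A \<longleftrightarrow> transpose A = A"

definition psd :: "real^'n^'n \<Rightarrow> bool" where
  "psd A \<longleftrightarrow> sym_mat A \<and> (\<forall>v. 0 \<le> v \<bullet> (A *v v))"

definition pinv :: "real^'n^'m \<Rightarrow> real^'m^'n" where
  "pinv A = (THE X. A ** X ** A = A \<and> X ** A ** X = X \<and>
       transpose (A ** X) = A ** X \<and> transpose (X ** A) = X ** A)"

definition blk11 :: "real^('q::finite+'r::finite)^('q+'r) \<Rightarrow> real^'q^'q" where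
  "blk11 N = (\<chi> i j. N $ Inl i $ Inl j)"
definition blk12 :: "real^('q::finite+'r::finite)^('q+'r) \<Rightarrow> real^'r^'q" where
  "blk12 N = (\<chi> i j. N $ Inl i $ Inr j)"
definition blk21 :: "real^('q::finite+'r::finite)^('q+'r) \<Rightarrow> real^'q^'r" where
  "blk21 N = (\<chi> i j. N $ Inr i $ Inl j)"
definition blk22 :: "real^('q::finite+'r::finite)^('q+'r) \<Rightarrow> real^'r^'r" where
  "blk22 N = (\<chi> i j. N $ Inr i $ Inr j)"

definition schur_compl :: "real^('q::finite+'r::finite)^('q+'r) \<Rightarrow> real^'q^'q" where
  "schur_compl N = blk11 N - blk12 N ** pinv (blk22 N) ** blk21 N"

definition Pi_set :: "(real^('q::finite+'r::finite)^('q+'r)) set" where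
  "Pi_set = {N. sym_mat N \<and> psd (- blk22 N) \<and> psd (schur_compl N) \<and>
      (\<forall>v. blk22 N *v v = 0 \<longrightarrow> blk12 N *v v = 0)}"

definition vstack :: "real^'q \<Rightarrow> real^'r \<Rightarrow> real^('q+'r)" where
  "vstack x y = (\<chi> k. case k of Inl i \<Rightarrow> x $ i | Inr j \<Rightarrow> y $ j)"

definition IZ :: "real^'q^'r \<Rightarrow> real^'q^('q+'r)" where
  "IZ Z = (\<chi> k. case k of Inl i \<Rightarrow> mat 1 $ i | Inr j \<Rightarrow> Z $ j)"

definition Zset :: "real^('q::finite+'r::finite)^('q+'r) \<Rightarrow> (real^'q^'r) set" where
  "Zset N = {Z. psd (transpose (IZ Z) ** N ** IZ Z)}"

end

theory Submission
  imports Defs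
begin

text \<open>Since the kernel of \<open>N\<^sub>2\<^sub>2\<close> lies in that of \<open>N\<^sub>1\<^sub>2\<close>, completing the square gives
  \<open>[v; w]\<^sup>T N [v; w] = v\<^sup>T S v + (w + K v)\<^sup>T N\<^sub>2\<^sub>2 (w + K v)\<close> with \<open>S = N | N\<^sub>2\<^sub>2 \<ge> 0\<close>,
  \<open>N\<^sub>2\<^sub>2 \<le> 0\<close> and \<open>K = N\<^sub>2\<^sub>2\<^sup>\<dagger> N\<^sub>2\<^sub>1\<close>. For the given \<open>[x; y]\<close> put \<open>w\<^sub>0 = y + K x\<close>,
  \<open>s = x\<^sup>T S x\<close> and \<open>c = w\<^sub>0\<^sup>T N\<^sub>2\<^sub>2 w\<^sub>0 \<le> 0\<close>, so that \<open>s + c \<ge> 0\<close>. Choosing \<open>Z v = (u\<^sup>T v) w\<^sub>0 - K v\<close>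
  with \<open>u\<^sup>T x = 1\<close> gives \<open>Z x = y\<close> and turns the quadratic form of \<open>[I; Z]\<^sup>T N [I; Z]\<close> into
  \<open>v\<^sup>T S v + (u\<^sup>T v)\<^sup>2 c\<close>. As \<open>c \<ge> -s\<close>, this is nonnegative for \<open>u = S x / s\<close> when \<open>s > 0\<close>
  by the Cauchy--Schwarz inequality for \<open>S\<close>, and for any \<open>u\<close> when \<open>s = 0\<close>, since then \<open>c = 0\<close>.\<close>

lemma inner_matrix_vector_transpose: "(M *v a) \<bullet> (b :: real^'n) = a \<bullet> (transpose M *v b)"
  by (metis dot_lmul_matrix inner_commute transpose_matrix_vector)

lemma sym_mat_inner: "sym_mat C \<Longrightarrow> (C *v a) \<bullet> b = a \<bullet> (C *v b)"
  by (simp add: inner_matrix_vector_transpose sym_mat_def)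

lemma sym_matI:
  fixes M :: "real^'n^'n"
  assumes "\<And>u w. (M *v u) \<bullet> w = u \<bullet> (M *v w)"
  shows "sym_mat M"
proof -
  have "(transpose M *v a) \<bullet> b = (M *v a) \<bullet> b" for a b
    by (metis assms inner_matrix_vector_transpose transpose_transpose)
  then have "transpose M *v a = M *v a" for a
    by (metis vector_eq_rdot)
  then show ?thesis by (simp add: sym_mat_def matrix_eq)
qed

lemma psd_neg_quadratic_form_le:
  assumes "psd (- C)" shows "w \<bullet> (C *v w) \<le> (0::real)"
proof -
  have "(- C) *v w = - (C *v w)"
    using matrix_vector_mult_diff_rdistrib[of 0 C w] by simp
  moreover have "0 \<le> w \<bullet> ((- C) *v w)" using assms by (simp add: psd_def)
  ultimately show ?thesis by simp
qed

section \<open>The Moore--Penrose pseudo-inverse of a symmetric matrix\<close>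

definition penrose_inverse :: "real^'n^'m \<Rightarrow> real^'m^'n \<Rightarrow> bool" where
  "penrose_inverse A X \<longleftrightarrow> A ** X ** A = A \<and> X ** A ** X = X \<and>
       transpose (A ** X) = A ** X \<and> transpose (X ** A) = X ** A"

lemma penrose_inverse_unique:
  assumes "penrose_inverse A X" "penrose_inverse A Y" shows "X = Y"
proof -
  from assms have X: "A ** X ** A = A" "X ** A ** X = X" "transpose (A ** X) = A ** X"
      "transpose (X ** A) = X ** A"
    and Y: "A ** Y ** A = A" "Y ** A ** Y = Y" "transpose (A ** Y) = A ** Y"
      "transpose (Y ** A) = Y ** A"
    unfolding penrose_inverse_def by auto
  have tA: "transpose A = transpose A ** transpose Y ** transpose A"
    by (metis Y(1) matrix_transpose_mul matrix_mul_assoc)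
  have tA': "transpose A = transpose A ** transpose X ** transpose A"
    by (metis X(1) matrix_transpose_mul matrix_mul_assoc)
  have AX: "transpose X ** transpose A = A ** X" by (metis X(3) matrix_transpose_mul)
  have AY: "transpose Y ** transpose A = A ** Y" by (metis Y(3) matrix_transpose_mul)
  have XA: "transpose A ** transpose X = X ** A" by (metis X(4) matrix_transpose_mul)
  have YA: "transpose A ** transpose Y = Y ** A" by (metis Y(4) matrix_transpose_mul)
  have "X = X ** (A ** X)" using X(2) by (simp add: matrix_mul_assoc)
  also have "\<dots> = X ** (transpose X ** transpose A)" using AX by simp
  also have "\<dots> = X ** (transpose X ** (transpose A ** transpose Y ** transpose A))"
    using tA by simp
  also have "\<dots> = X ** (transpose X ** transpose A) ** (transpose Y ** transpose A)"
    by (simp add: matrix_mul_assoc)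
  also have "\<dots> = X ** A ** X ** A ** Y" using AX AY by (simp add: matrix_mul_assoc)
  also have "\<dots> = X ** A ** Y" using X(2) by simp
  finally have X_eq: "X = X ** A ** Y" .
  have "Y = (Y ** A) ** Y" using Y(2) by (simp add: matrix_mul_assoc)
  also have "\<dots> = (transpose A ** transpose Y) ** Y" using YA by simp
  also have "\<dots> = (transpose A ** transpose X ** transpose A) ** transpose Y ** Y"
    using tA' by simp
  also have "\<dots> = (transpose A ** transpose X) ** (transpose A ** transpose Y) ** Y"
    by (simp add: matrix_mul_assoc)
  also have "\<dots> = X ** A ** (Y ** A ** Y)" using XA YA by (simp add: matrix_mul_assoc)
  also have "\<dots> = X ** A ** Y" using Y(2) by simp
  finally show ?thesis using X_eq by simp
qed

lemma penrose_inverse_transpose: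
  assumes "sym_mat C" "penrose_inverse C X" shows "penrose_inverse C (transpose X)"
proof -
  have tC: "transpose C = C" using assms(1) by (simp add: sym_mat_def)
  from assms(2) have X: "C ** X ** C = C" "X ** C ** X = X" "transpose (C ** X) = C ** X"
      "transpose (X ** C) = X ** C"
    unfolding penrose_inverse_def by auto
  show ?thesis unfolding penrose_inverse_def
  proof (intro conjI)
    show "C ** transpose X ** C = C"
      by (metis X(1) tC matrix_transpose_mul matrix_mul_assoc)
    show "transpose X ** C ** transpose X = transpose X"
      by (metis X(2) tC matrix_transpose_mul matrix_mul_assoc)
    show "transpose (C ** transpose X) = C ** transpose X"
      by (metis X(4) tC matrix_transpose_mul)
    show "transpose (transpose X ** C) = transpose X ** C"
      by (metis X(3) tC matrix_transpose_mul)
  qed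
qed

lemma orthogonal_projection_exists:
  fixes V :: "'a::euclidean_space set"
  assumes "subspace V"
  obtains P where "linear P" "\<And>u. P u \<in> V" "\<And>v. v \<in> V \<Longrightarrow> P v = v"
    "\<And>u w. P u \<bullet> w = u \<bullet> P w"
proof -
  obtain B where B: "pairwise orthogonal B" "\<And>x. x \<in> B \<Longrightarrow> norm x = 1"
    "independent B" "span B = V"
    using orthonormal_basis_subspace[OF assms] by metis
  define P where "P u = (\<Sum>b\<in>B. (u \<bullet> b) *\<^sub>R b)" for u
  show ?thesis
  proof
    show "linear P"
      by (rule linearI) (simp_all add: P_def inner_add_left scaleR_add_left sum.distrib
          scaleR_sum_right)
    show "P u \<in> V" for u
      unfolding P_def B(4)[symmetric] by (intro span_sum span_scale span_base)
    show "v \<in> V \<Longrightarrow> P v = v" for v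
      unfolding P_def using orthonormal_basis_expand[OF B(1,2)] B(3,4)
      by (auto simp: independent_imp_finite)
    show "P u \<bullet> w = u \<bullet> P w" for u w
      unfolding P_def by (simp add: inner_sum_left inner_sum_right mult.commute inner_commute)
  qed
qed

lemma sym_mat_inj_on_range:
  fixes C :: "real^'n^'n"
  assumes "sym_mat C"
  shows "inj_on ((*v) C) (range ((*v) C))"
proof (rule inj_onI)
  fix v w assume "v \<in> range ((*v) C)" "w \<in> range ((*v) C)" and Cvw: "C *v v = C *v w"
  then obtain t where t: "v - w = C *v t"
    by (metis (no_types, lifting) imageE matrix_vector_mult_diff_distrib)
  have "(v - w) \<bullet> (v - w) = t \<bullet> (C *v (v - w))"
    using sym_mat_inner[OF assms, of t "v - w"] t by simp
  also have "\<dots> = 0" using Cvw by (simp add: matrix_vector_mult_diff_distrib)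
  finally show "v = w" by simp
qed

lemma sym_mat_mult_projection_range:
  fixes C :: "real^'n^'n"
  assumes sC: "sym_mat C" and P: "\<And>v. v \<in> range ((*v) C) \<Longrightarrow> P v = v"
    "\<And>u w. P u \<bullet> w = u \<bullet> P w"
  shows "C *v P u = C *v u"
proof -
  \<comment> \<open>\<open>u - P u\<close> is orthogonal to the range of \<open>C\<close>, hence lies in its kernel\<close>
  let ?d = "u - P u"
  have "(C *v ?d) \<bullet> (C *v ?d) = ?d \<bullet> (C *v (C *v ?d))" by (rule sym_mat_inner[OF sC])
  also have "\<dots> = u \<bullet> (C *v (C *v ?d)) - u \<bullet> P (C *v (C *v ?d))"
    by (simp only: inner_diff_left P(2))
  also have "\<dots> = 0" by (simp only: P(1)[OF rangeI] diff_self)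
  finally show ?thesis by (simp add: matrix_vector_mult_diff_distrib)
qed

lemma penrose_inverse_exists:
  fixes C :: "real^'n^'n"
  assumes sC: "sym_mat C"
  shows "\<exists>X. penrose_inverse C X"
proof -
  define V where "V = range ((*v) C)"
  have V: "subspace V"
    unfolding V_def by (metis matrix_vector_mul_linear linear_subspace_image subspace_UNIV)
  obtain P where P: "linear P" "\<And>u. P u \<in> V" "\<And>v. v \<in> V \<Longrightarrow> P v = v"
    "\<And>u w. P u \<bullet> w = u \<bullet> P w"
    using orthogonal_projection_exists[OF V] by blast
  have CP: "C *v P u = C *v u" for u
    using sym_mat_mult_projection_range[OF sC] P(3,4) unfolding V_def by blast
  obtain g where g: "range g \<subseteq> V" "linear g" "\<And>v. v \<in> V \<Longrightarrow> g (C *v v) = v"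
    using real_vector.linear_exists_left_inverse_on[OF matrix_vector_mul_linear V
        sym_mat_inj_on_range[OF sC, folded V_def]] by blast
  define G where "G = matrix (g \<circ> P)"
  have Gv: "G *v u = g (P u)" for u
    unfolding G_def using linear_compose[OF P(1) g(2)] by simp
  have GC: "G *v (C *v u) = P u" for u
  proof -
    have "G *v (C *v u) = g (C *v P u)"
      using Gv P(3)[of "C *v u"] by (simp add: V_def CP)
    then show ?thesis using g(3) P(2) by simp
  qed
  have CG: "C *v (G *v u) = P u" for u
  proof -
    obtain w where w: "P u = C *v w" using P(2)[of u] unfolding V_def by auto
    have "C *v (G *v u) = C *v g (C *v P w)" using Gv w CP by simp
    also have "\<dots> = C *v P w" using g(3)[OF P(2)[of w]] by simp
    also have "\<dots> = P u" using w CP by simp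
    finally show ?thesis .
  qed
  have "penrose_inverse C G" unfolding penrose_inverse_def
  proof (intro conjI)
    show "C ** G ** C = C"
      by (simp add: matrix_eq GC CP flip: matrix_vector_mul_assoc)
    have "G *v u \<in> V" for u using Gv g(1) by auto
    then show "G ** C ** G = G"
      by (simp add: matrix_eq GC P(3) flip: matrix_vector_mul_assoc)
    show "transpose (C ** G) = C ** G"
      by (rule sym_matI[unfolded sym_mat_def]) (simp add: CG P(4) flip: matrix_vector_mul_assoc)
    show "transpose (G ** C) = G ** C"
      by (rule sym_matI[unfolded sym_mat_def]) (simp add: GC P(4) flip: matrix_vector_mul_assoc)
  qed
  then show ?thesis by blast
qed

lemma pinv_sym_mat:
  fixes C :: "real^'n^'n"
  assumes "sym_mat C"
  shows "penrose_inverse C (pinv C)" "sym_mat (pinv C)"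
proof -
  obtain X where X: "penrose_inverse C X" using penrose_inverse_exists[OF assms] by blast
  have "pinv C = X" unfolding pinv_def
    by (rule the_equality) (use X penrose_inverse_unique in \<open>auto simp: penrose_inverse_def\<close>)
  then show "penrose_inverse C (pinv C)" "sym_mat (pinv C)"
    using X penrose_inverse_unique[OF penrose_inverse_transpose[OF assms X] X]
    by (simp_all add: sym_mat_def)
qed

lemma sum_UNIV_Plus:
  fixes f :: "'a::finite + 'b::finite \<Rightarrow> 'c::comm_monoid_add"
  shows "(\<Sum>k\<in>UNIV. f k) = (\<Sum>i\<in>UNIV. f (Inl i)) + (\<Sum>j\<in>UNIV. f (Inr j))"
  by (simp flip: UNIV_Plus_UNIV add: sum.Plus o_def)

lemma inner_vstack: "vstack a b \<bullet> vstack c d = a \<bullet> c + b \<bullet> d"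
  by (simp add: inner_vec_def sum_UNIV_Plus vstack_def)

lemma matrix_vector_mult_vstack:
  "N *v vstack x y = vstack (blk11 N *v x + blk12 N *v y) (blk21 N *v x + blk22 N *v y)"
  by (auto simp: vec_eq_iff matrix_vector_mult_def vstack_def blk11_def blk12_def blk21_def
      blk22_def sum_UNIV_Plus split: sum.split)

lemma IZ_mult_vector:
  fixes Z :: "real^'q::finite^'r" and x :: "real^'q"
  shows "IZ Z *v x = vstack x (Z *v x)"
proof -
  have "(\<Sum>j\<in>UNIV. mat 1 $ i $ j * x $ j) = (\<Sum>j\<in>UNIV. if i = j then x $ j else 0)"
    for i :: 'q
    by (rule sum.cong) (auto simp: mat_def)
  then show ?thesis
    by (auto simp: vec_eq_iff IZ_def vstack_def matrix_vector_mult_def split: sum.split)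
qed

lemma sym_mat_entry:
  assumes "sym_mat N" shows "N $ j $ i = N $ i $ j"
proof -
  have "transpose N $ i $ j = N $ i $ j" using assms by (simp add: sym_mat_def)
  then show ?thesis by (simp add: transpose_def)
qed

lemma blk21_eq_transpose_blk12:
  assumes "sym_mat N" shows "blk21 N = transpose (blk12 N)"
  using sym_mat_entry[OF assms, of "Inr _" "Inl _"]
  by (simp add: vec_eq_iff blk21_def blk12_def transpose_def)

lemma sym_mat_blk22:
  assumes "sym_mat N" shows "sym_mat (blk22 N)"
  using sym_mat_entry[OF assms, of "Inr _" "Inr _"]
  by (simp add: sym_mat_def vec_eq_iff blk22_def transpose_def)

lemma Zset_iff:
  assumes "sym_mat N"
  shows "Z \<in> Zset N \<longleftrightarrow> (\<forall>v. 0 \<le> vstack v (Z *v v) \<bullet> (N *v vstack v (Z *v v)))"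
proof -
  have "(transpose (IZ Z) ** N ** IZ Z) *v v = transpose (IZ Z) *v (N *v (IZ Z *v v))" for v
    by (simp add: matrix_vector_mul_assoc matrix_mul_assoc)
  then have "v \<bullet> ((transpose (IZ Z) ** N ** IZ Z) *v v) = (IZ Z *v v) \<bullet> (N *v (IZ Z *v v))" for v
    by (simp only: inner_matrix_vector_transpose)
  moreover have "sym_mat (transpose (IZ Z) ** N ** IZ Z)"
    using assms by (simp add: sym_mat_def matrix_transpose_mul matrix_mul_assoc)
  ultimately show ?thesis by (simp add: Zset_def psd_def IZ_mult_vector)
qed

section \<open>Completing the square\<close>

lemma blk22_pinv_blk21:
  assumes "sym_mat N" "\<And>v. blk22 N *v v = 0 \<Longrightarrow> blk12 N *v v = 0"
  shows "blk22 N ** pinv (blk22 N) ** blk21 N = blk21 N"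
proof -
  let ?C = "blk22 N" and ?B = "blk12 N" and ?G = "pinv (blk22 N)"
  have G: "penrose_inverse ?C ?G" "sym_mat ?G" "sym_mat ?C"
    using pinv_sym_mat sym_mat_blk22[OF assms(1)] by blast+
  then have CGC: "?C ** ?G ** ?C = ?C" by (simp add: penrose_inverse_def)
  have "?B *v (u - ?G *v (?C *v u)) = 0" for u
    by (intro assms(2))
      (simp add: matrix_vector_mult_diff_distrib matrix_vector_mul_assoc matrix_mul_assoc CGC)
  then have "(?B ** ?G ** ?C) *v u = ?B *v u" for u
    using matrix_vector_mult_diff_distrib[of ?B] by (simp flip: matrix_vector_mul_assoc)
  then have "?B ** ?G ** ?C = ?B" by (simp add: matrix_eq)
  then show ?thesis
    using G(2,3) by (metis blk21_eq_transpose_blk12[OF assms(1)] matrix_transpose_mul matrix_mul_assoc sym_mat_def)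
qed

lemma quadratic_form_schur_compl:
  fixes N :: "real^('q::finite+'r::finite)^('q+'r)"
  assumes "sym_mat N" "\<And>v. blk22 N *v v = 0 \<Longrightarrow> blk12 N *v v = 0"
  defines "K \<equiv> pinv (blk22 N) ** blk21 N"
  shows "vstack v w \<bullet> (N *v vstack v w)
    = v \<bullet> (schur_compl N *v v) + (w + K *v v) \<bullet> (blk22 N *v (w + K *v v))"
proof -
  let ?A = "blk11 N" and ?B = "blk12 N" and ?C = "blk22 N"
  have Bt: "blk21 N = transpose ?B" by (rule blk21_eq_transpose_blk12[OF assms(1)])
  have CK: "?C *v (K *v v) = blk21 N *v v"
    using blk22_pinv_blk21[OF assms(1,2)] by (simp add: K_def matrix_vector_mul_assoc matrix_mul_assoc)
  have BKw: "u \<bullet> (blk21 N *v v) = v \<bullet> (?B *v u)" for u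
    by (metis Bt dot_lmul_matrix inner_commute transpose_matrix_vector)
  have "(K *v v) \<bullet> (?C *v w) = v \<bullet> (?B *v w)"
    using sym_mat_inner[OF sym_mat_blk22[OF assms(1)], of "K *v v" w] CK BKw
    by (simp add: inner_commute)
  moreover have "v \<bullet> (schur_compl N *v v) = v \<bullet> (?A *v v) - v \<bullet> (?B *v (K *v v))"
    by (simp add: schur_compl_def K_def matrix_vector_mult_diff_rdistrib inner_diff_right
        matrix_vector_mul_assoc matrix_mul_assoc)
  ultimately show ?thesis
    by (simp add: matrix_vector_mult_vstack inner_vstack BKw CK inner_add_left inner_add_right
        matrix_vector_right_distrib)
qed

section \<open>A rank-one perturbation of a positive semidefinite form\<close>

lemma psd_quadratic_form_ge:
  fixes S :: "real^'n^'n"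
  assumes "psd S" and s: "0 < x \<bullet> (S *v x)"
  shows "(x \<bullet> (S *v v))\<^sup>2 / (x \<bullet> (S *v x)) \<le> v \<bullet> (S *v v)"
proof -
  define s m where "s = x \<bullet> (S *v x)" and "m = x \<bullet> (S *v v)"
  define t where "t = m / s"
  have vSx: "v \<bullet> (S *v x) = m"
    using sym_mat_inner[of S x v] assms(1) by (simp add: psd_def m_def inner_commute)
  have "0 \<le> (v - t *\<^sub>R x) \<bullet> (S *v (v - t *\<^sub>R x))" using assms(1) by (simp add: psd_def)
  also have "\<dots> = v \<bullet> (S *v v) - 2 * t * m + t\<^sup>2 * s"
    by (simp add: matrix_vector_mult_diff_distrib matrix_vector_mult_scaleR inner_diff_left
        inner_diff_right vSx flip: m_def s_def) (simp add: algebra_simps power2_eq_square)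
  also have "\<dots> = v \<bullet> (S *v v) - m\<^sup>2 / s" using s by (simp add: t_def s_def power2_eq_square field_simps)
  finally show ?thesis by (simp add: m_def s_def)
qed

lemma psd_rank_one_perturbation:
  fixes S :: "real^'n^'n"
  assumes S: "psd S" and "x \<noteq> 0" and c: "c \<le> 0" "0 \<le> x \<bullet> (S *v x) + c"
  obtains u where "u \<bullet> x = 1" "\<And>v. 0 \<le> v \<bullet> (S *v v) + (u \<bullet> v)\<^sup>2 * c"
proof (cases "x \<bullet> (S *v x) = 0")
  case True
  with c have "c = 0" by simp
  with S \<open>x \<noteq> 0\<close> show ?thesis by (intro that[of "x /\<^sub>R (x \<bullet> x)"]) (auto simp: psd_def)
next
  case False
  define s where "s = x \<bullet> (S *v x)"
  with False S have s: "0 < s" by (simp add: psd_def order_less_le)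
  have Sx: "(S *v x) \<bullet> v = x \<bullet> (S *v v)" for v
    using S by (simp add: psd_def sym_mat_inner)
  show ?thesis
  proof (rule that[of "(S *v x) /\<^sub>R s"])
    show "((S *v x) /\<^sub>R s) \<bullet> x = 1" using s by (simp add: Sx s_def)
    fix v
    have "(x \<bullet> (S *v v) / s)\<^sup>2 * (- c) \<le> (x \<bullet> (S *v v) / s)\<^sup>2 * s"
      using c by (intro mult_left_mono) (auto simp: s_def)
    also have "\<dots> = (x \<bullet> (S *v v))\<^sup>2 / s" using s by (simp add: power2_eq_square)
    also have "\<dots> \<le> v \<bullet> (S *v v)" using psd_quadratic_form_ge[OF S, of x v] s by (simp add: s_def)
    finally show "0 \<le> v \<bullet> (S *v v) + (((S *v x) /\<^sub>R s) \<bullet> v)\<^sup>2 * c"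
      by (simp add: Sx divide_inverse mult.commute)
  qed
qed

definition outer_prod :: "real^'m \<Rightarrow> real^'n \<Rightarrow> real^'n^'m" where
  "outer_prod a b = (\<chi> i j. a $ i * b $ j)"

lemma outer_prod_mult_vector: "outer_prod a b *v v = (b \<bullet> v) *\<^sub>R a"
  by (simp add: vec_eq_iff outer_prod_def matrix_vector_mult_def inner_vec_def sum_distrib_left
      mult.commute mult.left_commute)

theorem mainTheorem6:
  fixes N :: "real^('q::finite+'r::finite)^('q+'r)" and x :: "real^'q" and y :: "real^'r"
  assumes "N \<in> Pi_set"
    and "x \<noteq> 0"
    and "0 \<le> vstack x y \<bullet> (N *v vstack x y)"
  shows "\<exists>Z \<in> Zset N. vstack x y = IZ Z *v x"
proof -
  define K where "K = pinv (blk22 N) ** blk21 N"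
  define w0 where "w0 = y + K *v x"
  have N: "sym_mat N" "psd (- blk22 N)" "psd (schur_compl N)"
    "\<And>v. blk22 N *v v = 0 \<Longrightarrow> blk12 N *v v = 0"
    using assms(1) by (auto simp: Pi_set_def)
  note schur = quadratic_form_schur_compl[OF N(1,4), folded K_def]
  obtain u where u: "u \<bullet> x = 1"
    "\<And>v. 0 \<le> v \<bullet> (schur_compl N *v v) + (u \<bullet> v)\<^sup>2 * (w0 \<bullet> (blk22 N *v w0))"
    using psd_rank_one_perturbation[OF N(3) assms(2) psd_neg_quadratic_form_le[OF N(2)]]
      assms(3) by (metis schur w0_def)
  define Z where "Z = outer_prod w0 u - K"
  have Zv: "Z *v v + K *v v = (u \<bullet> v) *\<^sub>R w0" for v
    by (simp add: Z_def matrix_vector_mult_diff_rdistrib outer_prod_mult_vector)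
  have "Z \<in> Zset N"
    using u(2) by (simp add: Zset_iff[OF N(1)] schur Zv matrix_vector_mult_scaleR power2_eq_square
        mult.assoc mult.left_commute)
  moreover have "vstack x y = IZ Z *v x"
    using Zv[of x] by (simp add: IZ_mult_vector u(1) w0_def)
  ultimately show ?thesis by blast
qed

end
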